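(* Consider the single-asset setting of the context. (i) For $t\in[0,T)$, $C(t)$ is strictly increasing in $\Lambda$ and strictly increasing in $\alpha\Sigma$. (ii) Let $t\in[0,T)$ and $x>0$ be fixed. Then $\xi^*(t,x)$ is strictly decreasing in $\Lambda$; consequently $\tilde X(t)$ is strictly increasing in $\Lambda$ for $t\in(0,T)$. (iii) Let $t\in[0,T)$ and $x>0$ be fixed. Then $\xi^*(t,x)$ is strictly increasing in $\alpha\Sigma$; consequently $\tilde X(t)$ is strictly decreasing in $\alpha\Sigma$ for $t\in(0,T)$. (In each statement the remaining parameters are held fixed.)
   Context: Single-asset setting: $T>0$, price impact $\Lambda>0$, variance $\Sigma\ge0$, risk aversion $\alpha\ge0$, dark pool intensity $\theta\ge0$. Let $\tilde\theta:=\sqrt{\theta^2+4\alpha\Sigma/\Lambda}$ and for $t\in[0,T)$ $$C(t)=\frac{\Lambda\tilde\theta}{2}\coth\Big(\frac{\tilde\theta}{2}(T-t)\Big)-\frac{\Lambda\theta}{2}\ \text{ if }\theta>0\text{ or }\alpha\Sigma>0,\qquad C(t)=\frac{\Lambda}{T-t}\ \text{ otherwise};$$ $C(t)x^2$ is the value function of the optimal liquidation problem (expected impact costs $\Lambda\int\xi^2$ plus risk costs $\alpha\Sigma\int X^2$). The optimal exchange trading rate is $\xi^*(t,x)=C(t)x/\Lambda$, and with initial position $x$ at time $0$, $\tilde X(t):=x\exp\big(-\int_0^tC(s)/\Lambda\,ds\big)$ is the optimal trajectory before any dark pool execution. *)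

theory Defs
  imports "HOL-Analysis.Analysis"
begin

definition coth :: "real \<Rightarrow> real" where
  "coth y = cosh y / sinh y"

definition theta_tilde :: "real \<Rightarrow> real \<Rightarrow> real \<Rightarrow> real \<Rightarrow> real" where
  "theta_tilde \<Lambda> \<alpha> \<Sigma> \<theta> = sqrt (\<theta>^2 + 4 * \<alpha> * \<Sigma> / \<Lambda>)"

definition C :: "real \<Rightarrow> real \<Rightarrow> real \<Rightarrow> real \<Rightarrow> real \<Rightarrow> real \<Rightarrow> real" where
  "C \<Lambda> \<alpha> \<Sigma> \<theta> T t =
     (if \<theta> > 0 \<or> \<alpha> * \<Sigma> > 0
      then \<Lambda> * theta_tilde \<Lambda> \<alpha> \<Sigma> \<theta> / 2 * coth (theta_tilde \<Lambda> \<alpha> \<Sigma> \<theta> / 2 * (T - t)) - \<Lambda> * \<theta> / 2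
      else \<Lambda> / (T - t))"

definition xi_star :: "real \<Rightarrow> real \<Rightarrow> real \<Rightarrow> real \<Rightarrow> real \<Rightarrow> real \<Rightarrow> real \<Rightarrow> real" where
  "xi_star \<Lambda> \<alpha> \<Sigma> \<theta> T t x = C \<Lambda> \<alpha> \<Sigma> \<theta> T t * x / \<Lambda>"

definition X_tilde :: "real \<Rightarrow> real \<Rightarrow> real \<Rightarrow> real \<Rightarrow> real \<Rightarrow> real \<Rightarrow> real \<Rightarrow> real" where
  "X_tilde \<Lambda> \<alpha> \<Sigma> \<theta> T x t = x * exp (- integral {0..t} (\<lambda>s. C \<Lambda> \<alpha> \<Sigma> \<theta> T s / \<Lambda>))"

end

theory Submission
  imports Defs
begin

text \<open>Put \<open>\<tau> = T - t\<close>. Then \<open>C / \<Lambda> = (\<phi> (theta_tilde) - \<theta>) / 2\<close> with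
  \<open>\<phi> s = s coth (s \<tau> / 2)\<close>, which is strictly increasing because \<open>y coth y\<close> is. As theta_tilde
  decreases in \<open>\<Lambda>\<close> and increases in \<open>\<alpha>\<Sigma>\<close>, this orders the trading rates \<open>\<xi>* = x C / \<Lambda>\<close>, and
  integrating the rates gives the reverse order on \<open>X = x exp (- \<integral> C / \<Lambda>)\<close>. Monotonicity of \<open>C\<close>
  in \<open>\<alpha>\<Sigma>\<close> is then immediate. In \<open>\<Lambda>\<close> it comes from
  \<open>C = 2\<alpha>\<Sigma> / (theta_tilde + \<theta>) + \<Lambda> theta_tilde (coth (theta_tilde \<tau> / 2) - 1) / 2\<close>
  (a consequence of \<open>\<Lambda> (theta_tilde\<^sup>2 - \<theta>\<^sup>2) = 4\<alpha>\<Sigma>\<close>): theta_tilde decreases while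
  \<open>\<Lambda> theta_tilde = sqrt (\<Lambda>\<^sup>2 \<theta>\<^sup>2 + 4\<alpha>\<Sigma>\<Lambda>)\<close> strictly increases.\<close>

lemma less_sinh_real:
  fixes y :: real
  assumes "0 < y"
  shows "y < sinh y"
proof -
  have "sinh 0 - 0 < sinh y - y"
  proof (rule DERIV_pos_imp_increasing_open[OF assms])
    fix x :: real assume "0 < x"
    then show "\<exists>d. ((\<lambda>x. sinh x - x) has_real_derivative d) (at x) \<and> d > 0"
      using cosh_real_nonneg_less_iff[of 0 x]
      by (intro exI[of _ "cosh x - 1"]) (auto intro!: derivative_eq_intros)
  qed (intro continuous_intros)
  then show ?thesis by simp
qed

lemma sinh_less_mult_cosh:
  fixes y :: real
  assumes "0 < y"
  shows "sinh y < y * cosh y"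
proof -
  have "0 * cosh 0 - sinh 0 < y * cosh y - sinh y"
  proof (rule DERIV_pos_imp_increasing_open[OF assms])
    fix x :: real assume "0 < x"
    then show "\<exists>d. ((\<lambda>x. x * cosh x - sinh x) has_real_derivative d) (at x) \<and> d > 0"
      by (intro exI[of _ "x * sinh x"]) (auto intro!: derivative_eq_intros)
  qed (intro continuous_intros)
  then show ?thesis by simp
qed

lemma one_less_mult_coth:
  fixes y :: real
  assumes "0 < y"
  shows "1 < y * coth y"
  using sinh_less_mult_cosh[OF assms] assms by (simp add: coth_def field_simps)

lemma mult_coth_strict_mono:
  fixes y1 y2 :: real
  assumes "0 < y1" "y1 < y2"
  shows "y1 * coth y1 < y2 * coth y2"
proof -
  have "y1 * cosh y1 / sinh y1 < y2 * cosh y2 / sinh y2"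
  proof (rule DERIV_pos_imp_increasing[OF assms(2)])
    fix x :: real assume "y1 \<le> x"
    with assms have "0 < x" by linarith
    have "x < sinh x * cosh x"
      using less_sinh_real[of "2 * x"] \<open>0 < x\<close> by (simp add: sinh_double)
    then have "0 < (sinh x * cosh x - x) / (sinh x)\<^sup>2"
      using \<open>0 < x\<close> by simp
    moreover have "((\<lambda>x. x * cosh x / sinh x) has_real_derivative
        (sinh x * cosh x - x) / (sinh x)\<^sup>2) (at x)"
    proof -
      have "cosh x * cosh x = 1 + sinh x * sinh x"
        using cosh_square_eq[of x] by (simp add: power2_eq_square)
      with \<open>0 < x\<close> show ?thesis
        by (auto intro!: derivative_eq_intros simp: divide_simps power2_eq_square algebra_simps)
    qed
    ultimately show "\<exists>d. ((\<lambda>x. x * cosh x / sinh x) has_real_derivative d) (at x) \<and> d > 0"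
      by blast
  qed
  then show ?thesis by (simp add: coth_def)
qed

lemma one_less_coth:
  fixes y :: real
  assumes "0 < y"
  shows "1 < coth y"
  using assms sinh_less_cosh_real[of y] by (simp add: coth_def)

lemma coth_antimono:
  fixes y1 y2 :: real
  assumes "0 < y1" "y1 \<le> y2"
  shows "coth y2 \<le> coth y1"
proof -
  have "0 \<le> sinh (y2 - y1)"
    using assms by simp
  then have "cosh y2 * sinh y1 \<le> cosh y1 * sinh y2"
    by (simp add: sinh_diff mult.commute)
  moreover have "0 < sinh y1" "0 < sinh y2"
    using assms by auto
  ultimately show ?thesis
    by (simp add: coth_def field_simps)
qed

text \<open>The value at \<open>s = 0\<close> is the limit of \<open>s * coth (s / 2 * \<tau>)\<close>; it matches the second
  branch of \<open>C\<close>.\<close>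
definition coth_rate :: "real \<Rightarrow> real \<Rightarrow> real" where
  "coth_rate \<tau> s = (if s = 0 then 2 / \<tau> else s * coth (s / 2 * \<tau>))"

lemma coth_rate_strict_mono:
  assumes "0 < \<tau>" "0 \<le> s1" "s1 < s2"
  shows "coth_rate \<tau> s1 < coth_rate \<tau> s2"
proof -
  have "2 / \<tau> * (s1 / 2 * \<tau> * coth (s1 / 2 * \<tau>)) < 2 / \<tau> * (s2 / 2 * \<tau> * coth (s2 / 2 * \<tau>))"
    if "s1 \<noteq> 0"
    using assms that by (intro mult_strict_left_mono mult_coth_strict_mono) auto
  moreover have "2 / \<tau> < 2 / \<tau> * (s2 / 2 * \<tau> * coth (s2 / 2 * \<tau>))"
    using assms one_less_mult_coth[of "s2 / 2 * \<tau>"] by (simp add: pos_divide_less_eq mult_ac)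
  ultimately show ?thesis
    using assms by (auto simp: coth_rate_def)
qed

lemma theta_tilde_pos_iff:
  assumes "0 < \<Lambda>" "0 \<le> \<alpha>" "0 \<le> \<Sigma>" "0 \<le> \<theta>"
  shows "0 < theta_tilde \<Lambda> \<alpha> \<Sigma> \<theta> \<longleftrightarrow> 0 < \<theta> \<or> 0 < \<alpha> * \<Sigma>"
proof -
  have "0 \<le> 4 * \<alpha> * \<Sigma> / \<Lambda>" "0 < 4 * \<alpha> * \<Sigma> / \<Lambda> \<longleftrightarrow> 0 < \<alpha> * \<Sigma>"
    using assms by (auto simp: zero_less_divide_iff ac_simps)
  moreover have "0 < \<theta>\<^sup>2 \<longleftrightarrow> 0 < \<theta>"
    using assms by auto
  ultimately show ?thesis
    unfolding theta_tilde_def by (smt (verit) real_sqrt_gt_zero real_sqrt_zero zero_le_power2)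
qed

lemma theta_tilde_antimono_Lambda:
  assumes "0 < \<Lambda>1" "\<Lambda>1 \<le> \<Lambda>2" "0 \<le> \<alpha> * \<Sigma>"
  shows "theta_tilde \<Lambda>2 \<alpha> \<Sigma> \<theta> \<le> theta_tilde \<Lambda>1 \<alpha> \<Sigma> \<theta>"
  using assms divide_left_mono[of \<Lambda>1 \<Lambda>2 "4 * (\<alpha> * \<Sigma>)"]
  by (simp add: theta_tilde_def mult.assoc)

lemma theta_tilde_strict_antimono_Lambda:
  assumes "0 < \<Lambda>1" "\<Lambda>1 < \<Lambda>2" "0 < \<alpha> * \<Sigma>"
  shows "theta_tilde \<Lambda>2 \<alpha> \<Sigma> \<theta> < theta_tilde \<Lambda>1 \<alpha> \<Sigma> \<theta>"
  using assms divide_strict_left_mono[of \<Lambda>1 \<Lambda>2 "4 * (\<alpha> * \<Sigma>)"]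
  by (simp add: theta_tilde_def mult.assoc)

lemma theta_tilde_strict_mono_risk:
  assumes "0 < \<Lambda>" "\<alpha>1 * \<Sigma>1 < \<alpha>2 * \<Sigma>2"
  shows "theta_tilde \<Lambda> \<alpha>1 \<Sigma>1 \<theta> < theta_tilde \<Lambda> \<alpha>2 \<Sigma>2 \<theta>"
  using assms divide_strict_right_mono[of "4 * (\<alpha>1 * \<Sigma>1)" "4 * (\<alpha>2 * \<Sigma>2)" \<Lambda>]
  by (simp add: theta_tilde_def mult.assoc)

lemma mult_theta_tilde_eq:
  assumes "0 < \<Lambda>"
  shows "\<Lambda> * theta_tilde \<Lambda> \<alpha> \<Sigma> \<theta> = sqrt (\<Lambda>\<^sup>2 * \<theta>\<^sup>2 + 4 * \<alpha> * \<Sigma> * \<Lambda>)"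
proof -
  have "\<Lambda>\<^sup>2 * (\<theta>\<^sup>2 + 4 * \<alpha> * \<Sigma> / \<Lambda>) = \<Lambda>\<^sup>2 * \<theta>\<^sup>2 + 4 * \<alpha> * \<Sigma> * \<Lambda>"
    using assms by (simp add: field_simps power2_eq_square)
  moreover have "sqrt (\<Lambda>\<^sup>2 * y) = \<Lambda> * sqrt y" for y
    using assms by (simp add: real_sqrt_mult)
  ultimately show ?thesis
    unfolding theta_tilde_def by metis
qed

lemma mult_theta_tilde_strict_mono_Lambda:
  assumes "0 < \<Lambda>1" "\<Lambda>1 < \<Lambda>2" "0 \<le> \<alpha> * \<Sigma>" "0 < \<theta> \<or> 0 < \<alpha> * \<Sigma>"
  shows "\<Lambda>1 * theta_tilde \<Lambda>1 \<alpha> \<Sigma> \<theta> < \<Lambda>2 * theta_tilde \<Lambda>2 \<alpha> \<Sigma> \<theta>"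
proof -
  have "\<Lambda>1\<^sup>2 * \<theta>\<^sup>2 \<le> \<Lambda>2\<^sup>2 * \<theta>\<^sup>2" "4 * (\<alpha> * \<Sigma>) * \<Lambda>1 \<le> 4 * (\<alpha> * \<Sigma>) * \<Lambda>2"
    using assms mult_left_mono[of \<Lambda>1 \<Lambda>2 "4 * (\<alpha> * \<Sigma>)"]
    by (auto intro!: mult_right_mono power_mono)
  moreover have "\<Lambda>1\<^sup>2 * \<theta>\<^sup>2 < \<Lambda>2\<^sup>2 * \<theta>\<^sup>2 \<or> 4 * (\<alpha> * \<Sigma>) * \<Lambda>1 < 4 * (\<alpha> * \<Sigma>) * \<Lambda>2"
    using assms power_strict_mono[of \<Lambda>1 \<Lambda>2 2] mult_strict_left_mono[of \<Lambda>1 \<Lambda>2 "4 * (\<alpha> * \<Sigma>)"]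
    by (auto simp: ac_simps)
  ultimately have "\<Lambda>1\<^sup>2 * \<theta>\<^sup>2 + 4 * (\<alpha> * \<Sigma>) * \<Lambda>1 < \<Lambda>2\<^sup>2 * \<theta>\<^sup>2 + 4 * (\<alpha> * \<Sigma>) * \<Lambda>2"
    by linarith
  then show ?thesis
    using assms by (simp add: mult_theta_tilde_eq mult.assoc)
qed

lemma C_div_Lambda_eq_coth_rate:
  assumes "0 < \<Lambda>" "0 \<le> \<alpha>" "0 \<le> \<Sigma>" "0 \<le> \<theta>" "t < T"
  shows "C \<Lambda> \<alpha> \<Sigma> \<theta> T t / \<Lambda> = (coth_rate (T - t) (theta_tilde \<Lambda> \<alpha> \<Sigma> \<theta>) - \<theta>) / 2"
proof (cases "0 < \<theta> \<or> 0 < \<alpha> * \<Sigma>")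
  case True
  then have "0 < theta_tilde \<Lambda> \<alpha> \<Sigma> \<theta>"
    using theta_tilde_pos_iff assms by blast
  with True assms show ?thesis
    by (simp add: C_def coth_rate_def field_simps)
next
  case False
  with assms have "\<theta> = 0" "theta_tilde \<Lambda> \<alpha> \<Sigma> \<theta> = 0"
    by (auto simp: theta_tilde_def zero_less_mult_iff)
  with False assms show ?thesis
    by (simp add: C_def coth_rate_def field_simps)
qed

lemma C_div_Lambda_strict_antimono_Lambda:
  assumes "0 < \<Lambda>1" "\<Lambda>1 < \<Lambda>2" "0 \<le> \<alpha>" "0 \<le> \<Sigma>" "0 < \<alpha> * \<Sigma>" "0 \<le> \<theta>" "t < T"
  shows "C \<Lambda>2 \<alpha> \<Sigma> \<theta> T t / \<Lambda>2 < C \<Lambda>1 \<alpha> \<Sigma> \<theta> T t / \<Lambda>1"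
proof -
  have "coth_rate (T - t) (theta_tilde \<Lambda>2 \<alpha> \<Sigma> \<theta>) < coth_rate (T - t) (theta_tilde \<Lambda>1 \<alpha> \<Sigma> \<theta>)"
    using assms theta_tilde_strict_antimono_Lambda[of \<Lambda>1 \<Lambda>2 \<alpha> \<Sigma> \<theta>]
    by (intro coth_rate_strict_mono) (auto simp: theta_tilde_def)
  with assms show ?thesis
    by (simp add: C_div_Lambda_eq_coth_rate)
qed

lemma C_div_Lambda_strict_mono_risk:
  assumes "0 < \<Lambda>" "0 \<le> \<alpha>1" "0 \<le> \<Sigma>1" "0 \<le> \<alpha>2" "0 \<le> \<Sigma>2" "\<alpha>1 * \<Sigma>1 < \<alpha>2 * \<Sigma>2"
    "0 \<le> \<theta>" "t < T"
  shows "C \<Lambda> \<alpha>1 \<Sigma>1 \<theta> T t / \<Lambda> < C \<Lambda> \<alpha>2 \<Sigma>2 \<theta> T t / \<Lambda>"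
proof -
  have "coth_rate (T - t) (theta_tilde \<Lambda> \<alpha>1 \<Sigma>1 \<theta>) < coth_rate (T - t) (theta_tilde \<Lambda> \<alpha>2 \<Sigma>2 \<theta>)"
    using assms theta_tilde_strict_mono_risk[of \<Lambda> \<alpha>1 \<Sigma>1 \<alpha>2 \<Sigma>2 \<theta>]
    by (intro coth_rate_strict_mono) (auto simp: theta_tilde_def)
  with assms show ?thesis
    by (simp add: C_div_Lambda_eq_coth_rate)
qed

lemma C_strict_mono_risk:
  assumes "0 < \<Lambda>" "0 \<le> \<alpha>1" "0 \<le> \<Sigma>1" "0 \<le> \<alpha>2" "0 \<le> \<Sigma>2" "\<alpha>1 * \<Sigma>1 < \<alpha>2 * \<Sigma>2"
    "0 \<le> \<theta>" "t < T"
  shows "C \<Lambda> \<alpha>1 \<Sigma>1 \<theta> T t < C \<Lambda> \<alpha>2 \<Sigma>2 \<theta> T t"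
  using C_div_Lambda_strict_mono_risk[OF assms] \<open>0 < \<Lambda>\<close> by (simp add: divide_less_cancel)

lemma C_eq_risk_term_plus_coth_term:
  assumes "0 < \<Lambda>" "0 \<le> \<alpha>" "0 \<le> \<Sigma>" "0 \<le> \<theta>" "0 < \<theta> \<or> 0 < \<alpha> * \<Sigma>"
  shows "C \<Lambda> \<alpha> \<Sigma> \<theta> T t = 2 * \<alpha> * \<Sigma> / (theta_tilde \<Lambda> \<alpha> \<Sigma> \<theta> + \<theta>)
    + \<Lambda> * theta_tilde \<Lambda> \<alpha> \<Sigma> \<theta> / 2 * (coth (theta_tilde \<Lambda> \<alpha> \<Sigma> \<theta> / 2 * (T - t)) - 1)"
proof -
  define s where "s = theta_tilde \<Lambda> \<alpha> \<Sigma> \<theta>"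
  have "0 < s"
    using theta_tilde_pos_iff assms by (simp add: s_def)
  have "s\<^sup>2 = \<theta>\<^sup>2 + 4 * \<alpha> * \<Sigma> / \<Lambda>"
    using assms by (simp add: s_def theta_tilde_def)
  then have "\<Lambda> * (s - \<theta>) * (s + \<theta>) = 4 * \<alpha> * \<Sigma>"
    using assms by (simp add: field_simps power2_eq_square)
  then have "2 * \<alpha> * \<Sigma> / (s + \<theta>) = \<Lambda> * (s - \<theta>) / 2"
    using \<open>0 < s\<close> assms by (simp add: field_simps)
  then show ?thesis
    using assms by (simp add: C_def s_def[symmetric] algebra_simps)
qed

lemma C_strict_mono_Lambda:
  assumes "0 < \<Lambda>1" "\<Lambda>1 < \<Lambda>2" "0 \<le> \<alpha>" "0 \<le> \<Sigma>" "0 \<le> \<theta>" "t < T"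
  shows "C \<Lambda>1 \<alpha> \<Sigma> \<theta> T t < C \<Lambda>2 \<alpha> \<Sigma> \<theta> T t"
proof (cases "0 < \<theta> \<or> 0 < \<alpha> * \<Sigma>")
  case False
  with assms show ?thesis
    by (simp add: C_def divide_strict_right_mono)
next
  case True
  define s1 s2 where "s1 = theta_tilde \<Lambda>1 \<alpha> \<Sigma> \<theta>" and "s2 = theta_tilde \<Lambda>2 \<alpha> \<Sigma> \<theta>"
  define \<kappa>1 \<kappa>2 where "\<kappa>1 = coth (s1 / 2 * (T - t)) - 1" and "\<kappa>2 = coth (s2 / 2 * (T - t)) - 1"
  have "0 < s2" "s2 \<le> s1"
    using assms True theta_tilde_pos_iff[of \<Lambda>2 \<alpha> \<Sigma> \<theta>] theta_tilde_antimono_Lambda[of \<Lambda>1 \<Lambda>2 \<alpha> \<Sigma> \<theta>]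
    by (auto simp: s1_def s2_def)
  then have risk_term: "2 * \<alpha> * \<Sigma> / (s1 + \<theta>) \<le> 2 * \<alpha> * \<Sigma> / (s2 + \<theta>)"
    using assms by (intro divide_left_mono) auto
  have "0 < \<kappa>1" "\<kappa>1 \<le> \<kappa>2"
    using \<open>0 < s2\<close> \<open>s2 \<le> s1\<close> assms one_less_coth[of "s1 / 2 * (T - t)"]
      coth_antimono[of "s2 / 2 * (T - t)" "s1 / 2 * (T - t)"]
    by (auto simp: \<kappa>1_def \<kappa>2_def)
  moreover have "\<Lambda>1 * s1 < \<Lambda>2 * s2"
    using assms True by (simp add: s1_def s2_def mult_theta_tilde_strict_mono_Lambda)
  ultimately have "\<Lambda>1 * s1 / 2 * \<kappa>1 < \<Lambda>2 * s2 / 2 * \<kappa>1"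
    by simp
  also have "\<dots> \<le> \<Lambda>2 * s2 / 2 * \<kappa>2"
    using \<open>\<kappa>1 \<le> \<kappa>2\<close> \<open>0 < s2\<close> assms(1,2) by (intro mult_left_mono) auto
  finally have coth_term: "\<Lambda>1 * s1 / 2 * \<kappa>1 < \<Lambda>2 * s2 / 2 * \<kappa>2" .
  have "C \<Lambda>1 \<alpha> \<Sigma> \<theta> T t = 2 * \<alpha> * \<Sigma> / (s1 + \<theta>) + \<Lambda>1 * s1 / 2 * \<kappa>1"
    unfolding s1_def \<kappa>1_def using assms True by (intro C_eq_risk_term_plus_coth_term) auto
  moreover have "C \<Lambda>2 \<alpha> \<Sigma> \<theta> T t = 2 * \<alpha> * \<Sigma> / (s2 + \<theta>) + \<Lambda>2 * s2 / 2 * \<kappa>2"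
    unfolding s2_def \<kappa>2_def using assms True by (intro C_eq_risk_term_plus_coth_term) auto
  ultimately show ?thesis
    using risk_term coth_term by linarith
qed

lemma xi_star_eq_rate: "xi_star \<Lambda> \<alpha> \<Sigma> \<theta> T t x = C \<Lambda> \<alpha> \<Sigma> \<theta> T t / \<Lambda> * x"
  by (simp add: xi_star_def)

lemma continuous_on_C_div_Lambda:
  assumes "0 < \<Lambda>" "0 \<le> \<alpha>" "0 \<le> \<Sigma>" "0 \<le> \<theta>" "t < T"
  shows "continuous_on {0..t} (\<lambda>s. C \<Lambda> \<alpha> \<Sigma> \<theta> T s / \<Lambda>)"
proof (cases "0 < \<theta> \<or> 0 < \<alpha> * \<Sigma>")
  case True
  then have "\<forall>s\<in>{0..t}. sinh (theta_tilde \<Lambda> \<alpha> \<Sigma> \<theta> / 2 * (T - s)) \<noteq> 0"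
    using assms theta_tilde_pos_iff[of \<Lambda> \<alpha> \<Sigma> \<theta>] by auto
  then show ?thesis
    unfolding C_def coth_def if_P[OF True] using assms(1) by (intro continuous_intros) auto
next
  case False
  then show ?thesis
    unfolding C_def if_not_P[OF False] using assms by (intro continuous_intros) auto
qed

lemma X_tilde_less_X_tilde:
  assumes "0 < \<Lambda>1" "0 \<le> \<alpha>1" "0 \<le> \<Sigma>1" "0 < \<Lambda>2" "0 \<le> \<alpha>2" "0 \<le> \<Sigma>2" "0 \<le> \<theta>"
    "0 < t" "t < T" "0 < x"
    "\<And>s. 0 \<le> s \<Longrightarrow> s < T \<Longrightarrow> C \<Lambda>2 \<alpha>2 \<Sigma>2 \<theta> T s / \<Lambda>2 < C \<Lambda>1 \<alpha>1 \<Sigma>1 \<theta> T s / \<Lambda>1"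
  shows "X_tilde \<Lambda>1 \<alpha>1 \<Sigma>1 \<theta> T x t < X_tilde \<Lambda>2 \<alpha>2 \<Sigma>2 \<theta> T x t"
proof -
  have "integral {0..t} (\<lambda>s. C \<Lambda>2 \<alpha>2 \<Sigma>2 \<theta> T s / \<Lambda>2) < integral {0..t} (\<lambda>s. C \<Lambda>1 \<alpha>1 \<Sigma>1 \<theta> T s / \<Lambda>1)"
    using assms by (intro integral_less_real continuous_on_C_div_Lambda) auto
  with \<open>0 < x\<close> show ?thesis
    by (simp add: X_tilde_def)
qed

theorem proposition4p2:
  fixes T \<theta> :: real
  assumes hT: "T > 0" and h\<theta>: "\<theta> \<ge> 0"
  shows
   "(\<forall>t \<Lambda>1 \<Lambda>2 \<alpha> \<Sigma>. 0 \<le> t \<and> t < T \<and> 0 < \<Lambda>1 \<and> \<Lambda>1 < \<Lambda>2 \<and> 0 \<le> \<alpha> \<and> 0 \<le> \<Sigma> \<longrightarrow>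
        C \<Lambda>1 \<alpha> \<Sigma> \<theta> T t < C \<Lambda>2 \<alpha> \<Sigma> \<theta> T t)
  \<and> (\<forall>t \<Lambda> \<alpha>1 \<Sigma>1 \<alpha>2 \<Sigma>2. 0 \<le> t \<and> t < T \<and> 0 < \<Lambda> \<and> 0 \<le> \<alpha>1 \<and> 0 \<le> \<Sigma>1 \<and> 0 \<le> \<alpha>2 \<and> 0 \<le> \<Sigma>2
        \<and> \<alpha>1 * \<Sigma>1 < \<alpha>2 * \<Sigma>2 \<longrightarrow>
        C \<Lambda> \<alpha>1 \<Sigma>1 \<theta> T t < C \<Lambda> \<alpha>2 \<Sigma>2 \<theta> T t)
  \<and> (\<forall>t x \<Lambda>1 \<Lambda>2 \<alpha> \<Sigma>. 0 \<le> t \<and> t < T \<and> 0 < x \<and> 0 < \<Lambda>1 \<and> \<Lambda>1 < \<Lambda>2 \<and> 0 \<le> \<alpha> \<and> 0 \<le> \<Sigma>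
        \<and> 0 < \<alpha> * \<Sigma> \<longrightarrow>
        xi_star \<Lambda>2 \<alpha> \<Sigma> \<theta> T t x < xi_star \<Lambda>1 \<alpha> \<Sigma> \<theta> T t x)
  \<and> (\<forall>t x \<Lambda>1 \<Lambda>2 \<alpha> \<Sigma>. 0 < t \<and> t < T \<and> 0 < x \<and> 0 < \<Lambda>1 \<and> \<Lambda>1 < \<Lambda>2 \<and> 0 \<le> \<alpha> \<and> 0 \<le> \<Sigma>
        \<and> 0 < \<alpha> * \<Sigma> \<longrightarrow>
        X_tilde \<Lambda>1 \<alpha> \<Sigma> \<theta> T x t < X_tilde \<Lambda>2 \<alpha> \<Sigma> \<theta> T x t)
  \<and> (\<forall>t x \<Lambda> \<alpha>1 \<Sigma>1 \<alpha>2 \<Sigma>2. 0 \<le> t \<and> t < T \<and> 0 < x \<and> 0 < \<Lambda> \<and> 0 \<le> \<alpha>1 \<and> 0 \<le> \<Sigma>1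
        \<and> 0 \<le> \<alpha>2 \<and> 0 \<le> \<Sigma>2 \<and> \<alpha>1 * \<Sigma>1 < \<alpha>2 * \<Sigma>2 \<longrightarrow>
        xi_star \<Lambda> \<alpha>1 \<Sigma>1 \<theta> T t x < xi_star \<Lambda> \<alpha>2 \<Sigma>2 \<theta> T t x)
  \<and> (\<forall>t x \<Lambda> \<alpha>1 \<Sigma>1 \<alpha>2 \<Sigma>2. 0 < t \<and> t < T \<and> 0 < x \<and> 0 < \<Lambda> \<and> 0 \<le> \<alpha>1 \<and> 0 \<le> \<Sigma>1
        \<and> 0 \<le> \<alpha>2 \<and> 0 \<le> \<Sigma>2 \<and> \<alpha>1 * \<Sigma>1 < \<alpha>2 * \<Sigma>2 \<longrightarrow>
        X_tilde \<Lambda> \<alpha>2 \<Sigma>2 \<theta> T x t < X_tilde \<Lambda> \<alpha>1 \<Sigma>1 \<theta> T x t)"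
proof (intro conjI allI impI)
  fix t \<Lambda>1 \<Lambda>2 \<alpha> \<Sigma> :: real
  assume "0 \<le> t \<and> t < T \<and> 0 < \<Lambda>1 \<and> \<Lambda>1 < \<Lambda>2 \<and> 0 \<le> \<alpha> \<and> 0 \<le> \<Sigma>"
  with h\<theta> show "C \<Lambda>1 \<alpha> \<Sigma> \<theta> T t < C \<Lambda>2 \<alpha> \<Sigma> \<theta> T t"
    by (blast intro: C_strict_mono_Lambda)
next
  fix t \<Lambda> \<alpha>1 \<Sigma>1 \<alpha>2 \<Sigma>2 :: real
  assume "0 \<le> t \<and> t < T \<and> 0 < \<Lambda> \<and> 0 \<le> \<alpha>1 \<and> 0 \<le> \<Sigma>1 \<and> 0 \<le> \<alpha>2 \<and> 0 \<le> \<Sigma>2 \<and> \<alpha>1 * \<Sigma>1 < \<alpha>2 * \<Sigma>2"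
  with h\<theta> show "C \<Lambda> \<alpha>1 \<Sigma>1 \<theta> T t < C \<Lambda> \<alpha>2 \<Sigma>2 \<theta> T t"
    by (blast intro: C_strict_mono_risk)
next
  fix t x \<Lambda>1 \<Lambda>2 \<alpha> \<Sigma> :: real
  assume "0 \<le> t \<and> t < T \<and> 0 < x \<and> 0 < \<Lambda>1 \<and> \<Lambda>1 < \<Lambda>2 \<and> 0 \<le> \<alpha> \<and> 0 \<le> \<Sigma> \<and> 0 < \<alpha> * \<Sigma>"
  with h\<theta> show "xi_star \<Lambda>2 \<alpha> \<Sigma> \<theta> T t x < xi_star \<Lambda>1 \<alpha> \<Sigma> \<theta> T t x"
    unfolding xi_star_eq_rate by (intro mult_strict_right_mono C_div_Lambda_strict_antimono_Lambda) auto
next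
  fix t x \<Lambda>1 \<Lambda>2 \<alpha> \<Sigma> :: real
  assume "0 < t \<and> t < T \<and> 0 < x \<and> 0 < \<Lambda>1 \<and> \<Lambda>1 < \<Lambda>2 \<and> 0 \<le> \<alpha> \<and> 0 \<le> \<Sigma> \<and> 0 < \<alpha> * \<Sigma>"
  with h\<theta> show "X_tilde \<Lambda>1 \<alpha> \<Sigma> \<theta> T x t < X_tilde \<Lambda>2 \<alpha> \<Sigma> \<theta> T x t"
    by (intro X_tilde_less_X_tilde C_div_Lambda_strict_antimono_Lambda) auto
next
  fix t x \<Lambda> \<alpha>1 \<Sigma>1 \<alpha>2 \<Sigma>2 :: real
  assume "0 \<le> t \<and> t < T \<and> 0 < x \<and> 0 < \<Lambda> \<and> 0 \<le> \<alpha>1 \<and> 0 \<le> \<Sigma>1 \<and> 0 \<le> \<alpha>2 \<and> 0 \<le> \<Sigma>2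
    \<and> \<alpha>1 * \<Sigma>1 < \<alpha>2 * \<Sigma>2"
  with h\<theta> show "xi_star \<Lambda> \<alpha>1 \<Sigma>1 \<theta> T t x < xi_star \<Lambda> \<alpha>2 \<Sigma>2 \<theta> T t x"
    unfolding xi_star_eq_rate by (intro mult_strict_right_mono C_div_Lambda_strict_mono_risk) auto
next
  fix t x \<Lambda> \<alpha>1 \<Sigma>1 \<alpha>2 \<Sigma>2 :: real
  assume "0 < t \<and> t < T \<and> 0 < x \<and> 0 < \<Lambda> \<and> 0 \<le> \<alpha>1 \<and> 0 \<le> \<Sigma>1 \<and> 0 \<le> \<alpha>2 \<and> 0 \<le> \<Sigma>2
    \<and> \<alpha>1 * \<Sigma>1 < \<alpha>2 * \<Sigma>2"
  with h\<theta> show "X_tilde \<Lambda> \<alpha>2 \<Sigma>2 \<theta> T x t < X_tilde \<Lambda> \<alpha>1 \<Sigma>1 \<theta> T x t"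
    by (intro X_tilde_less_X_tilde C_div_Lambda_strict_mono_risk) auto
qed

end
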